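(* Let $k\ge 3$ and let $n$ be sufficiently large. Define $f(n,k)=\frac{n}{k}$ if $n$ is even and $f(n,k)=\frac{n-1}{2k}$ if $n$ is odd. If $n$ is even, then $f(n,k)\cdot\mathsf{m}(k-1) \le N(BM,k,n) \le N(GM,k,n)$. If $n$ is odd, then $f(n,k)\cdot\mathsf{m}(k-1) \le N(GM,k,n)$ and $f(n,k)\cdot \mathsf{m}(k-2) \le N(BM,k,n)$.
   Context: We are given $n$ balls, the set $[n]=\{1,\dots,n\}$, each colored with one of two colors by an unknown coloring. A ball $i$ is a majority ball if more than $n/2$ balls have the same color as $i$. A query is a subset $Q\subseteq[n]$ with $|Q|=k$. In the General (Yes-No) Model (GM), the answer to a query $Q$ is YES if $Q$ contains two balls of different colors and NO otherwise. In Borzyszkowski's Model (BM), the answer is YES together with a pair of balls of $Q$ having different colors (the pair may be any such pair) if such a pair exists, and NO if all balls of $Q$ have the same color. A non-adaptive strategy is a family of queries $Q_1,\dots,Q_q$ fixed in advance. It succeeds if for every coloring and every admissible sequence of answers, the answers determine the outcome: either every coloring consistent with the answers has no majority ball, or there is a ball that is a majority ball in every coloring consistent with the answers. $N(GM,k,n)$ and $N(BM,k,n)$ denote the minimum number of queries in a successful non-adaptive strategy in the respective model. A hypergraph has Property B if its vertices can be 2-colored with no monochromatic edge. For $k\ge 1$, $\mathsf{m}(k)$ is the minimum number of edges of a $k$-uniform hypergraph that does not have Property B. *)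

theory Defs
  imports Complex_Main
begin

text \<open>Balls are 1..n; a coloring is a function nat => bool (only values on 1..n matter).\<close>

definition majority :: "nat \<Rightarrow> (nat \<Rightarrow> bool) \<Rightarrow> nat \<Rightarrow> bool" where
  "majority n c i \<longleftrightarrow> i \<in> {1..n} \<and> 2 * card {j \<in> {1..n}. c j = c i} > n"

definition determined :: "nat \<Rightarrow> (nat \<Rightarrow> bool) set \<Rightarrow> bool" where
  "determined n S \<longleftrightarrow>
     (\<forall>c\<in>S. \<forall>i. \<not> majority n c i) \<or> (\<exists>i\<in>{1..n}. \<forall>c\<in>S. majority n c i)"

definition valid_strategy :: "nat \<Rightarrow> nat \<Rightarrow> nat set list \<Rightarrow> bool" where
  "valid_strategy n k Qs \<longleftrightarrow> (\<forall>Q\<in>set Qs. Q \<subseteq> {1..n} \<and> card Q = k)"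

definition gm_ans :: "(nat \<Rightarrow> bool) \<Rightarrow> nat set \<Rightarrow> bool" where
  "gm_ans c Q \<longleftrightarrow> (\<exists>a\<in>Q. \<exists>b\<in>Q. c a \<noteq> c b)"

definition gm_success :: "nat \<Rightarrow> nat set list \<Rightarrow> bool" where
  "gm_success n Qs \<longleftrightarrow>
     (\<forall>c. determined n {c'. \<forall>Q\<in>set Qs. gm_ans c' Q = gm_ans c Q})"

text \<open>Borzyszkowski's model: answer None = NO, Some (a,b) = YES with a witnessing pair.
  An answer is admissible for coloring c if it is a truthful answer of this form.\<close>
definition bm_adm :: "(nat \<Rightarrow> bool) \<Rightarrow> nat set \<Rightarrow> (nat \<times> nat) option \<Rightarrow> bool" where
  "bm_adm c Q a \<longleftrightarrow>
     (a = None \<and> \<not> gm_ans c Q) \<or>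
     (\<exists>x y. a = Some (x, y) \<and> x \<in> Q \<and> y \<in> Q \<and> c x \<noteq> c y)"

definition bm_success :: "nat \<Rightarrow> nat set list \<Rightarrow> bool" where
  "bm_success n Qs \<longleftrightarrow>
     (\<forall>c As. length As = length Qs \<and> (\<forall>i<length Qs. bm_adm c (Qs ! i) (As ! i)) \<longrightarrow>
        determined n {c'. \<forall>i<length Qs. bm_adm c' (Qs ! i) (As ! i)})"

definition N_GM :: "nat \<Rightarrow> nat \<Rightarrow> nat" where
  "N_GM k n = (LEAST q. \<exists>Qs. length Qs = q \<and> valid_strategy n k Qs \<and> gm_success n Qs)"

definition N_BM :: "nat \<Rightarrow> nat \<Rightarrow> nat" where
  "N_BM k n = (LEAST q. \<exists>Qs. length Qs = q \<and> valid_strategy n k Qs \<and> bm_success n Qs)"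

definition propB :: "nat set set \<Rightarrow> bool" where
  "propB E \<longleftrightarrow> (\<exists>c :: nat \<Rightarrow> bool. \<forall>e\<in>E. \<exists>a\<in>e. \<exists>b\<in>e. c a \<noteq> c b)"

definition mB :: "nat \<Rightarrow> nat" where
  "mB k = (LEAST q. \<exists>E :: nat set set. finite E \<and> (\<forall>e\<in>E. card e = k) \<and> \<not> propB E \<and> card E = q)"

definition f :: "nat \<Rightarrow> nat \<Rightarrow> real" where
  "f n k = (if even n then real n / real k else (real n - 1) / (2 * real k))"

end

theory Submission
  imports Defs
begin

(*
  The lower bounds come from an adversary argument.  If a ball x lies in fewer than m(k-1)
  queries, the sets Q - {x} of the queries Q through x form a hypergraph with Property B.
  Extending a proper 2-coloring of it gives a set A of half the balls, x in A, that leaves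
  every query through x non-monochromatic even after x is removed.  Then the colorings A and
  A - {x} receive the same answers (in BM with a common witness pair avoiding x), although A
  has no majority ball for even n while x is a majority ball of A - {x}.  So every ball lies in
  at least m(k-1) queries, and double counting gives N(BM,k,n) >= n m(k-1)/k.  For odd n the
  same construction, with a third coloring that recolors x or a second ball y, bounds the
  degree sums of pairs of balls: by m(k-1) in GM, and by m(k-2) in BM, where the witnesses
  must avoid both x and y.  Finally N(BM,k,n) <= N(GM,k,n) because a GM answer is a BM answer
  with the witness forgotten, and both minima are attained by querying all k-subsets.
*)

definition query_degree :: "nat set list \<Rightarrow> nat \<Rightarrow> nat" where
  "query_degree Qs x = card {Q \<in> set Qs. x \<in> Q}"

definition residual_queries :: "nat set list \<Rightarrow> nat set \<Rightarrow> nat set set" where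
  "residual_queries Qs D = (\<lambda>Q. Q - D) ` {Q \<in> set Qs. Q \<inter> D \<noteq> {}}"

lemma residual_queriesI: "Q \<in> set Qs \<Longrightarrow> Q \<inter> D \<noteq> {} \<Longrightarrow> Q - D \<in> residual_queries Qs D"
  unfolding residual_queries_def by blast

lemma finite_residual_queries: "finite (residual_queries Qs D)"
  unfolding residual_queries_def by simp

lemma card_residual_queries_le:
  assumes "finite D"
  shows "card (residual_queries Qs D) \<le> (\<Sum>d\<in>D. query_degree Qs d)"
proof -
  have "card (residual_queries Qs D) \<le> card {Q \<in> set Qs. Q \<inter> D \<noteq> {}}"
    unfolding residual_queries_def by (rule card_image_le) simp
  also have "{Q \<in> set Qs. Q \<inter> D \<noteq> {}} = (\<Union>d\<in>D. {Q \<in> set Qs. d \<in> Q})"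
    by blast
  also have "card \<dots> \<le> (\<Sum>d\<in>D. query_degree Qs d)"
    unfolding query_degree_def by (rule card_UN_le[OF assms])
  finally show ?thesis .
qed

lemma residual_queries_size:
  assumes "valid_strategy n k Qs" "finite D" "e \<in> residual_queries Qs D"
  shows "e \<subseteq> {1..n} \<and> k - card D \<le> card e"
proof -
  obtain Q where "Q \<in> set Qs" "e = Q - D"
    using assms(3) unfolding residual_queries_def by blast
  moreover from this have "Q \<subseteq> {1..n}" "card Q = k"
    using assms(1) unfolding valid_strategy_def by auto
  ultimately show ?thesis
    using diff_card_le_card_Diff[OF assms(2), of Q] by auto
qed

lemma gm_ans_mono: "gm_ans c Q \<Longrightarrow> Q \<subseteq> Q' \<Longrightarrow> gm_ans c Q'"
  unfolding gm_ans_def by blast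

lemma gm_ans_cong: "(\<And>a. a \<in> Q \<Longrightarrow> c a = c' a) \<Longrightarrow> gm_ans c Q = gm_ans c' Q"
  unfolding gm_ans_def by auto

lemma gm_ans_Not: "gm_ans (\<lambda>a. \<not> c a) Q = gm_ans c Q"
  unfolding gm_ans_def by auto

lemma gm_ans_insert:
  assumes "T \<noteq> {}" "\<forall>a\<in>T. c a = v"
  shows "gm_ans c (insert j T) \<longleftrightarrow> c j \<noteq> v"
  using assms unfolding gm_ans_def by auto

lemma bm_adm_imp_gm_ans: "bm_adm c Q a \<Longrightarrow> gm_ans c Q \<longleftrightarrow> a \<noteq> None"
  unfolding bm_adm_def gm_ans_def by auto

lemma determined_antimono: "determined n S \<Longrightarrow> T \<subseteq> S \<Longrightarrow> determined n T"
  unfolding determined_def by blast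

lemma gm_success_imp_bm_success:
  assumes "gm_success n Qs"
  shows "bm_success n Qs"
  unfolding bm_success_def
proof (intro allI impI)
  fix c As
  assume As: "length As = length Qs \<and> (\<forall>i<length Qs. bm_adm c (Qs ! i) (As ! i))"
  have "{c'. \<forall>i<length Qs. bm_adm c' (Qs ! i) (As ! i)} \<subseteq> {c'. \<forall>Q\<in>set Qs. gm_ans c' Q = gm_ans c Q}"
    using As by (auto simp: in_set_conv_nth) (metis bm_adm_imp_gm_ans)+
  moreover have "determined n {c'. \<forall>Q\<in>set Qs. gm_ans c' Q = gm_ans c Q}"
    using assms unfolding gm_success_def by blast
  ultimately show "determined n {c'. \<forall>i<length Qs. bm_adm c' (Qs ! i) (As ! i)}"
    using determined_antimono by blast
qed

lemma not_gm_successI: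
  assumes "c0 \<in> C" "\<forall>c\<in>C. \<forall>Q\<in>set Qs. gm_ans c Q = gm_ans c0 Q" "\<not> determined n C"
  shows "\<not> gm_success n Qs"
proof
  assume "gm_success n Qs"
  then have "determined n {c. \<forall>Q\<in>set Qs. gm_ans c Q = gm_ans c0 Q}"
    unfolding gm_success_def by blast
  then show False
    using assms(2,3) determined_antimono by blast
qed

lemma not_bm_successI:
  assumes "c0 \<in> C" "\<forall>Q\<in>set Qs. \<exists>a. \<forall>c\<in>C. bm_adm c Q a" "\<not> determined n C"
  shows "\<not> bm_success n Qs"
proof
  assume success: "bm_success n Qs"
  define As where "As = map (\<lambda>Q. SOME a. \<forall>c\<in>C. bm_adm c Q a) Qs"
  have "\<forall>c\<in>C. bm_adm c Q (SOME a. \<forall>c\<in>C. bm_adm c Q a)" if "Q \<in> set Qs" for Q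
    using someI_ex[OF assms(2)[rule_format, OF that]] .
  then have adm: "\<forall>c\<in>C. \<forall>i<length Qs. bm_adm c (Qs ! i) (As ! i)"
    unfolding As_def by simp
  have "determined n {c. \<forall>i<length Qs. bm_adm c (Qs ! i) (As ! i)}"
  proof -
    have "length As = length Qs" unfolding As_def by simp
    then show ?thesis
      using success adm assms(1) unfolding bm_success_def by blast
  qed
  then show False
    using adm assms(3) determined_antimono by blast
qed

lemma exists_common_bm_answer:
  assumes "\<forall>c\<in>C. \<forall>j\<in>Q - D. c j = c0 j" and "Q \<inter> D \<noteq> {} \<Longrightarrow> gm_ans c0 (Q - D)"
  shows "\<exists>a. \<forall>c\<in>C. bm_adm c Q a"
proof (cases "Q \<inter> D = {}")
  case True
  then have agree: "\<forall>c\<in>C. \<forall>j\<in>Q. c j = c0 j"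
    using assms(1) by blast
  show ?thesis
  proof (cases "gm_ans c0 Q")
    case True
    then obtain a b where "a \<in> Q" "b \<in> Q" "c0 a \<noteq> c0 b"
      unfolding gm_ans_def by blast
    then have "\<forall>c\<in>C. bm_adm c Q (Some (a, b))"
      using agree unfolding bm_adm_def by auto
    then show ?thesis by blast
  next
    case False
    then have "\<forall>c\<in>C. bm_adm c Q None"
      using agree gm_ans_cong[of Q] unfolding bm_adm_def by metis
    then show ?thesis by blast
  qed
next
  case False
  then obtain a b where "a \<in> Q - D" "b \<in> Q - D" "c0 a \<noteq> c0 b"
    using assms(2) unfolding gm_ans_def by blast
  then have "\<forall>c\<in>C. bm_adm c Q (Some (a, b))"
    using assms(1) unfolding bm_adm_def by auto
  then show ?thesis by blast
qed

lemma gm_ans_eq_if_agree_off: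
  assumes "\<forall>j\<in>Q - D. c j = c0 j" and "Q \<inter> D \<noteq> {} \<Longrightarrow> gm_ans c0 (Q - D)"
  shows "gm_ans c Q = gm_ans c0 Q"
proof -
  obtain a where "bm_adm c Q a" "bm_adm c0 Q a"
    using exists_common_bm_answer[of "{c, c0}" Q D c0] assms by auto
  then show ?thesis
    using bm_adm_imp_gm_ans by blast
qed

lemma gm_ans_eq_if_swapped:
  assumes "\<forall>j\<in>Q - {x, y}. c j = c0 j" "c0 x \<noteq> c0 y" "c x \<noteq> c y"
    and "x \<in> Q \<Longrightarrow> gm_ans c0 (Q - {x})" "y \<in> Q \<Longrightarrow> gm_ans c0 (Q - {y})"
  shows "gm_ans c Q = gm_ans c0 Q"
proof (cases "x \<in> Q \<and> y \<in> Q")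
  case True
  then have "gm_ans c Q" "gm_ans c0 Q"
    using assms(2,3) unfolding gm_ans_def by blast+
  then show ?thesis
    by simp
next
  case False
  show ?thesis
  proof (rule gm_ans_eq_if_agree_off[OF assms(1)])
    assume "Q \<inter> {x, y} \<noteq> {}"
    then consider "x \<in> Q" "Q - {x, y} = Q - {x}" | "y \<in> Q" "Q - {x, y} = Q - {y}"
      using False by blast
    then show "gm_ans c0 (Q - {x, y})"
      by cases (use assms(4,5) in simp_all)
  qed
qed

lemma majority_indicator:
  assumes "A \<subseteq> {1..n}"
  shows "majority n (\<lambda>j. j \<in> A) i \<longleftrightarrow>
    i \<in> {1..n} \<and> (if i \<in> A then n < 2 * card A else n < 2 * (n - card A))"
proof -
  have "{j \<in> {1..n}. (j \<in> A) = (i \<in> A)} = (if i \<in> A then A else {1..n} - A)"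
    using assms by auto
  moreover have "card ({1..n} - A) = n - card A"
    using assms by (simp add: card_Diff_subset finite_subset)
  ultimately show ?thesis
    unfolding majority_def by auto
qed

lemma majority_eq_if_same_classes:
  fixes c c' :: "nat \<Rightarrow> bool"
  assumes "\<forall>i\<in>{1..n}. \<forall>j\<in>{1..n}. (c' i = c' j) = (c i = c j)"
  shows "majority n c' i = majority n c i"
proof (cases "i \<in> {1..n}")
  case True
  then have "{j \<in> {1..n}. c' j = c' i} = {j \<in> {1..n}. c j = c i}"
    using assms by blast
  then show ?thesis
    unfolding majority_def by simp
qed (auto simp: majority_def)

lemma determined_if_same_classes:
  fixes c :: "nat \<Rightarrow> bool"
  assumes "\<forall>c'\<in>S. \<forall>i\<in>{1..n}. \<forall>j\<in>{1..n}. (c' i = c' j) = (c i = c j)"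
  shows "determined n S"
proof -
  have same: "majority n c' i = majority n c i" if "c' \<in> S" for c' i
    using majority_eq_if_same_classes[OF bspec[OF assms that]] .
  show ?thesis
  proof (cases "\<exists>i. majority n c i")
    case True
    then obtain i where "majority n c i" by blast
    then have "i \<in> {1..n}" "\<forall>c'\<in>S. majority n c' i"
      using same unfolding majority_def by auto
    then show ?thesis
      unfolding determined_def by blast
  next
    case False
    then show ?thesis
      using same unfolding determined_def by blast
  qed
qed

lemma not_determinedI:
  assumes "c \<in> S" "majority n c i" "\<And>i. \<exists>c\<in>S. \<not> majority n c i"
  shows "\<not> determined n S"
  using assms unfolding determined_def by blast

lemma not_determined_even:
  assumes "even n" "A \<subseteq> {1..n}" "card A = n div 2" "x \<in> A"
  shows "\<not> determined n {\<lambda>j. j \<in> A, \<lambda>j. j \<in> A - {x}}"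
proof (rule not_determinedI)
  have n: "n = 2 * (n div 2)"
    using assms(1) by simp
  have "finite A"
    using assms(2) finite_subset by blast
  then have "card A > 0"
    using assms(4) card_gt_0_iff by blast
  moreover have "card (A - {x}) = n div 2 - 1"
    using \<open>finite A\<close> assms(3,4) by simp
  moreover have "A - {x} \<subseteq> {1..n}" "x \<notin> A - {x}" "x \<in> {1..n}"
    using assms(2,4) by auto
  ultimately show "majority n (\<lambda>j. j \<in> A - {x}) x"
    using majority_indicator[of "A - {x}" n x] assms(3) n by simp
  have "\<not> majority n (\<lambda>j. j \<in> A) i" for i
    using majority_indicator[OF assms(2), of i] assms(3) n by (auto split: if_splits)
  then show "\<exists>c\<in>{\<lambda>j. j \<in> A, \<lambda>j. j \<in> A - {x}}. \<not> majority n c i" for i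
    by blast
qed simp

lemma not_majority_recolored:
  assumes "odd n" "A \<subseteq> {1..n}" "card A = n div 2 + 1" "x \<in> A" "y \<in> {1..n}" "x \<noteq> y"
  defines "B \<equiv> if y \<in> A then A - {y} else insert y (A - {x})"
  shows "\<not> majority n (\<lambda>j. j \<in> B) x"
proof -
  have n: "n = 2 * (n div 2) + 1"
    using assms(1) by simp
  have "finite A"
    using assms(2) finite_subset by blast
  show ?thesis
  proof (cases "y \<in> A")
    case True
    then have "card B = n div 2" "x \<in> B" "B \<subseteq> {1..n}"
      unfolding B_def using assms(2,3,4,6) \<open>finite A\<close> by auto
    then show ?thesis
      using majority_indicator[of B n x] n by (simp; linarith)
  next
    case False
    then have "card B = n div 2 + 1" "x \<notin> B" "B \<subseteq> {1..n}"
      unfolding B_def using assms(2,3,4,5) \<open>finite A\<close> by auto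
    then show ?thesis
      using majority_indicator[of B n x] n by (simp; linarith)
  qed
qed

lemma not_determined_odd:
  assumes "odd n" "A \<subseteq> {1..n}" "card A = n div 2 + 1" "x \<in> A" "\<not> majority n c x"
  shows "\<not> determined n {\<lambda>j. j \<in> A, \<lambda>j. j \<in> A - {x}, c}"
proof (rule not_determinedI)
  have n: "n = 2 * (n div 2) + 1"
    using assms(1) by simp
  have A_x: "A - {x} \<subseteq> {1..n}" "card (A - {x}) = n div 2"
    using assms(2,3,4) finite_subset[OF assms(2)] by auto
  show "majority n (\<lambda>j. j \<in> A) x"
    using majority_indicator[OF assms(2), of x] assms(2,3,4) n by auto
  have "\<not> majority n (\<lambda>j. j \<in> A) i \<or> \<not> majority n (\<lambda>j. j \<in> A - {x}) i" if "i \<noteq> x" for i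
  proof (cases "i \<in> A")
    case True
    then have "\<not> majority n (\<lambda>j. j \<in> A - {x}) i"
      using majority_indicator[OF A_x(1), of i] A_x(2) n that by simp
    then show ?thesis ..
  next
    case False
    then have "\<not> majority n (\<lambda>j. j \<in> A) i"
      using majority_indicator[OF assms(2), of i] assms(3) n by (simp; linarith)
    then show ?thesis ..
  qed
  then show "\<exists>c'\<in>{\<lambda>j. j \<in> A, \<lambda>j. j \<in> A - {x}, c}. \<not> majority n c' i" for i
    using assms(5) by (cases "i = x") blast+
qed simp

lemma exists_monochromatic_subset:
  fixes c :: "nat \<Rightarrow> bool"
  assumes "2 * k \<le> n + 1"
  obtains T v where "T \<subseteq> {1..n}" "card T = k" "\<forall>a\<in>T. c a = v"
proof -
  have "card {j \<in> {1..n}. c j} + card {j \<in> {1..n}. \<not> c j} =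
      card ({j \<in> {1..n}. c j} \<union> {j \<in> {1..n}. \<not> c j})"
    by (rule card_Un_disjoint[symmetric]) auto
  also have "{j \<in> {1..n}. c j} \<union> {j \<in> {1..n}. \<not> c j} = {1..n}"
    by blast
  finally have "card {j \<in> {1..n}. c j} + card {j \<in> {1..n}. \<not> c j} = n"
    by simp
  then consider "k \<le> card {j \<in> {1..n}. c j}" | "k \<le> card {j \<in> {1..n}. \<not> c j}"
    using assms by linarith
  then show thesis
  proof cases
    case 1
    then obtain T where "T \<subseteq> {j \<in> {1..n}. c j}" "card T = k"
      by (meson obtain_subset_with_card_n)
    then show thesis
      using that[of T True] by force
  next
    case 2
    then obtain T where "T \<subseteq> {j \<in> {1..n}. \<not> c j}" "card T = k"
      by (meson obtain_subset_with_card_n)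
    then show thesis
      using that[of T False] by force
  qed
qed

lemma same_color_as_if_probes_agree:
  assumes "finite T" "card T = k" "2 \<le> k" "\<forall>a\<in>T. c a = v" "\<forall>a\<in>T. c' a = v'"
    and probes: "\<And>P. P \<subseteq> T \<Longrightarrow> card P = k - 1 \<Longrightarrow> l \<notin> P \<Longrightarrow>
      gm_ans c' (insert l P) = gm_ans c (insert l P)"
  shows "(c' l = v') = (c l = v)"
proof -
  have "k - 1 \<le> card (T - {l})"
    using assms(2) diff_card_le_card_Diff[of "{l}" T] by simp
  then obtain P where P: "P \<subseteq> T - {l}" "card P = k - 1"
    by (meson obtain_subset_with_card_n)
  then have "P \<noteq> {}"
    using assms(3) by auto
  then show ?thesis
    using probes[of P] P gm_ans_insert[of P c' v' l] gm_ans_insert[of P c v l] assms(4,5) by auto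
qed

lemma gm_success_if_all_subsets_queried:
  assumes "2 \<le> k" "2 * k \<le> n + 1" and all: "\<And>Q. Q \<subseteq> {1..n} \<Longrightarrow> card Q = k \<Longrightarrow> Q \<in> set Qs"
  shows "gm_success n Qs"
  unfolding gm_success_def
proof
  fix c :: "nat \<Rightarrow> bool"
  obtain T v where T: "T \<subseteq> {1..n}" "card T = k" "\<forall>a\<in>T. c a = v"
    using exists_monochromatic_subset assms(2) by blast
  have "finite T"
    using T(1) finite_subset by blast
  show "determined n {c'. \<forall>Q\<in>set Qs. gm_ans c' Q = gm_ans c Q}"
  proof (rule determined_if_same_classes, intro ballI)
    fix c' i j
    assume c': "c' \<in> {c'. \<forall>Q\<in>set Qs. gm_ans c' Q = gm_ans c Q}" and ij: "i \<in> {1..n}" "j \<in> {1..n}"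
    have "\<not> gm_ans c T"
      using T(3) unfolding gm_ans_def by simp
    then have "\<not> gm_ans c' T"
      using c' all[OF T(1,2)] by simp
    then obtain v' where v': "\<forall>a\<in>T. c' a = v'"
      unfolding gm_ans_def by blast
    have "(c' l = v') = (c l = v)" if "l \<in> {1..n}" for l
    proof (rule same_color_as_if_probes_agree[OF \<open>finite T\<close> T(2) assms(1) T(3) v'])
      fix P
      assume "P \<subseteq> T" "card P = k - 1" "l \<notin> P"
      then have "insert l P \<subseteq> {1..n}" "card (insert l P) = k"
        using T(1) that assms(1) finite_subset[OF _ \<open>finite T\<close>] by auto
      then show "gm_ans c' (insert l P) = gm_ans c (insert l P)"
        using c' all by simp
    qed
    then show "(c' i = c' j) = (c i = c j)"
      using ij by blast
  qed
qed

lemma exists_gm_strategy: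
  assumes "2 \<le> k" "2 * k \<le> n + 1"
  shows "\<exists>Qs. valid_strategy n k Qs \<and> gm_success n Qs"
proof -
  have "finite {Q. Q \<subseteq> {1..n} \<and> card Q = k}"
    by (rule finite_subset[of _ "Pow {1..n}"]) auto
  then obtain Qs where Qs: "set Qs = {Q. Q \<subseteq> {1..n} \<and> card Q = k}"
    by (meson finite_list)
  have "valid_strategy n k Qs"
    unfolding valid_strategy_def Qs by simp
  moreover have "gm_success n Qs"
    by (rule gm_success_if_all_subsets_queried[OF assms]) (simp add: Qs)
  ultimately show ?thesis by blast
qed

lemma N_GM_attained:
  assumes "2 \<le> k" "2 * k \<le> n + 1"
  shows "\<exists>Qs. length Qs = N_GM k n \<and> valid_strategy n k Qs \<and> gm_success n Qs"
proof -
  obtain Qs where "valid_strategy n k Qs" "gm_success n Qs"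
    using exists_gm_strategy[OF assms] by blast
  then have "\<exists>Qs'. length Qs' = length Qs \<and> valid_strategy n k Qs' \<and> gm_success n Qs'"
    by blast
  then show ?thesis
    unfolding N_GM_def by (rule LeastI)
qed

lemma N_BM_attained:
  assumes "2 \<le> k" "2 * k \<le> n + 1"
  shows "\<exists>Qs. length Qs = N_BM k n \<and> valid_strategy n k Qs \<and> bm_success n Qs"
proof -
  obtain Qs where "valid_strategy n k Qs" "bm_success n Qs"
    using exists_gm_strategy[OF assms] gm_success_imp_bm_success by blast
  then have "\<exists>Qs'. length Qs' = length Qs \<and> valid_strategy n k Qs' \<and> bm_success n Qs'"
    by blast
  then show ?thesis
    unfolding N_BM_def by (rule LeastI)
qed

lemma N_BM_le_N_GM:
  assumes "2 \<le> k" "2 * k \<le> n + 1"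
  shows "N_BM k n \<le> N_GM k n"
proof -
  obtain Qs where "length Qs = N_GM k n" "valid_strategy n k Qs" "bm_success n Qs"
    using N_GM_attained[OF assms] gm_success_imp_bm_success by blast
  then have "\<exists>Qs'. length Qs' = N_GM k n \<and> valid_strategy n k Qs' \<and> bm_success n Qs'"
    by blast
  then show ?thesis
    unfolding N_BM_def by (rule Least_le)
qed

lemma propB_if_card_less_mB:
  assumes "finite E" "\<forall>e\<in>E. card e = j" "card E < mB j"
  shows "propB E"
  using not_less_Least[OF assms(3)[unfolded mB_def]] assms(1,2) by blast

lemma exists_subset_with_trace:
  assumes "finite U" "P \<subseteq> V" "V \<subseteq> U" "card V \<le> t" "t + card V \<le> card U"
  obtains A where "A \<subseteq> U" "card A = t" "A \<inter> V = P"
proof -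
  have "finite V"
    using finite_subset[OF assms(3,1)] .
  then have "finite P" "card P \<le> card V"
    using finite_subset[OF assms(2)] card_mono[OF _ assms(2)] by auto
  moreover have "card (U - V) = card U - card V"
    using card_Diff_subset[OF \<open>finite V\<close> assms(3)] .
  ultimately have "t - card P \<le> card (U - V)"
    using assms(4,5) by linarith
  then obtain W where W: "W \<subseteq> U - V" "card W = t - card P"
    by (meson obtain_subset_with_card_n)
  have "finite W"
    using W(1) assms(1) by (meson finite_Diff finite_subset)
  have "card (P \<union> W) = card P + card W"
    using W(1) assms(2) \<open>finite P\<close> \<open>finite W\<close> by (intro card_Un_disjoint) auto
  then have "card (P \<union> W) = t"
    using W(2) \<open>card P \<le> card V\<close> assms(4) by linarith
  moreover have "P \<union> W \<subseteq> U" "(P \<union> W) \<inter> V = P"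
    using W(1) assms(2,3) by auto
  ultimately show thesis
    using that by blast
qed

lemma exists_proper_coloring:
  assumes "finite E" "\<forall>e\<in>E. card e = j" "card E < mB j"
  obtains d where "d x" "\<forall>e\<in>E. gm_ans d e"
proof -
  obtain d0 where d0: "\<forall>e\<in>E. gm_ans d0 e"
    using propB_if_card_less_mB[OF assms] unfolding propB_def gm_ans_def by blast
  have "(\<lambda>i. d0 i = d0 x) = d0 \<or> (\<lambda>i. d0 i = d0 x) = (\<lambda>i. \<not> d0 i)"
    by auto
  then have "\<forall>e\<in>E. gm_ans (\<lambda>i. d0 i = d0 x) e"
    using d0 gm_ans_Not[of d0] by auto
  then show thesis
    using that[of "\<lambda>i. d0 i = d0 x"] by simp
qed

text \<open>Properly 2-color \<open>j\<close>-subsets of the edges, giving \<open>x\<close> the color \<open>True\<close>, and fill up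
  the color class of \<open>x\<close> with balls outside these subsets.\<close>
lemma exists_splitting_set:
  assumes "finite E" "\<forall>e\<in>E. e \<subseteq> {1..n} \<and> j \<le> card e" "card E < mB j" "x \<in> {1..n}"
    "j * card E < t" "t + j * card E < n"
  obtains A where "A \<subseteq> {1..n}" "card A = t" "x \<in> A" "\<forall>e\<in>E. gm_ans (\<lambda>i. i \<in> A) e"
proof -
  have "\<forall>e\<in>E. \<exists>e'. e' \<subseteq> e \<and> card e' = j"
    using assms(2) by (meson obtain_subset_with_card_n)
  then obtain sel where sel: "\<And>e. e \<in> E \<Longrightarrow> sel e \<subseteq> e \<and> card (sel e) = j"
    by metis
  have card_sel: "card (sel ` E) \<le> card E"
    using assms(1) card_image_le by blast
  obtain d where d: "d x" "\<forall>e\<in>sel ` E. gm_ans d e"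
    using exists_proper_coloring[of "sel ` E" j] sel card_sel assms(1,3) by auto
  define V where "V = insert x (\<Union> (sel ` E))"
  have "V \<subseteq> {1..n}"
    unfolding V_def using sel assms(2,4) by blast
  have "card (\<Union> (sel ` E)) \<le> (\<Sum>e\<in>sel ` E. card e)"
    by (rule card_Union_le_sum_card)
  also have "\<dots> = (\<Sum>e\<in>sel ` E. j)"
    using sel by (intro sum.cong) auto
  also have "\<dots> \<le> j * card E"
    using card_sel by simp
  finally have "card V \<le> j * card E + 1"
    using finite_subset[OF \<open>V \<subseteq> {1..n}\<close>] unfolding V_def by (simp add: card_insert_if)
  then have "card V \<le> t" "t + card V \<le> card {1..n}"
    using assms(5,6) by simp_all
  then obtain A where A: "A \<subseteq> {1..n}" "card A = t" "A \<inter> V = {i \<in> V. d i}"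
    using exists_subset_with_trace[OF finite_atLeastAtMost Collect_restrict \<open>V \<subseteq> {1..n}\<close>] by blast
  have on_V: "(i \<in> A) = d i" if "i \<in> V" for i
    using A(3) that by blast
  have "gm_ans (\<lambda>i. i \<in> A) e" if "e \<in> E" for e
  proof -
    have "gm_ans (\<lambda>i. i \<in> A) (sel e)"
      using d(2) that gm_ans_cong[of "sel e" "\<lambda>i. i \<in> A" d] on_V unfolding V_def by blast
    then show ?thesis
      using gm_ans_mono[of _ "sel e" e] sel[OF that] by blast
  qed
  moreover have "x \<in> A"
    using on_V d(1) unfolding V_def by blast
  ultimately show thesis
    using that A(1,2) by blast
qed

lemma sum_query_degree_le:
  assumes "valid_strategy n k Qs"
  shows "(\<Sum>x\<in>{1..n}. query_degree Qs x) \<le> k * length Qs"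
proof -
  have "(\<Sum>x\<in>{1..n}. query_degree Qs x) = (\<Sum>Q\<in>set Qs. k)"
    unfolding query_degree_def
  proof (rule sum_multicount_gen)
    show "\<forall>Q\<in>set Qs. card {x \<in> {1..n}. x \<in> Q} = k"
    proof
      fix Q
      assume "Q \<in> set Qs"
      then have "Q \<subseteq> {1..n}" "card Q = k"
        using assms unfolding valid_strategy_def by auto
      moreover have "{x \<in> {1..n}. x \<in> Q} = Q"
        using calculation by auto
      ultimately show "card {x \<in> {1..n}. x \<in> Q} = k"
        by simp
    qed
  qed auto
  also have "\<dots> \<le> k * length Qs"
    by (simp add: card_length)
  finally show ?thesis .
qed

lemma sum_ge_if_pairwise_sums_ge:
  fixes h :: "'a \<Rightarrow> nat"
  assumes "finite S" "\<And>x y. x \<in> S \<Longrightarrow> y \<in> S \<Longrightarrow> x \<noteq> y \<Longrightarrow> m \<le> h x + h y"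
  shows "(card S - 1) * m \<le> 2 * sum h S"
proof (cases "S = {}")
  case False
  then obtain x0 where x0: "x0 \<in> S" "\<And>y. y \<in> S \<Longrightarrow> h x0 \<le> h y"
    using ex_has_least_nat[of "\<lambda>x. x \<in> S" _ h] by blast
  have "card (S - {x0}) = card S - 1"
    using x0(1) by simp
  then have "(card S - 1) * (m - h x0) \<le> sum h (S - {x0})"
    "(card S - 1) * h x0 \<le> sum h (S - {x0})"
    using sum_bounded_below[of "S - {x0}" "m - h x0" h] sum_bounded_below[of "S - {x0}" "h x0" h]
      assms(2)[OF x0(1)] x0(2) by force+
  moreover have "sum h (S - {x0}) \<le> sum h S"
    using assms(1) by (simp add: sum_mono2)
  moreover have "m \<le> (m - h x0) + h x0"
    by simp
  then have "(card S - 1) * m \<le> (card S - 1) * (m - h x0) + (card S - 1) * h x0"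
    by (metis add_mult_distrib2 mult_le_mono2)
  ultimately show ?thesis
    by linarith
qed simp

lemma length_ge_if_degrees_ge:
  assumes "valid_strategy n k Qs" "\<And>x. x \<in> {1..n} \<Longrightarrow> m \<le> query_degree Qs x"
  shows "n * m \<le> k * length Qs"
proof -
  have "n * m \<le> (\<Sum>x\<in>{1..n}. query_degree Qs x)"
    using sum_bounded_below[of "{1..n}" m "query_degree Qs"] assms(2) by simp
  also have "\<dots> \<le> k * length Qs"
    using sum_query_degree_le[OF assms(1)] .
  finally show ?thesis .
qed

lemma length_ge_if_pair_degrees_ge:
  assumes "valid_strategy n k Qs"
    "\<And>x y. x \<in> {1..n} \<Longrightarrow> y \<in> {1..n} \<Longrightarrow> x \<noteq> y \<Longrightarrow> m \<le> query_degree Qs x + query_degree Qs y"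
  shows "(n - 1) * m \<le> 2 * k * length Qs"
proof -
  have "(n - 1) * m \<le> 2 * (\<Sum>x\<in>{1..n}. query_degree Qs x)"
    using sum_ge_if_pairwise_sums_ge[of "{1..n}" m "query_degree Qs"] assms(2) by simp
  also have "\<dots> \<le> 2 * k * length Qs"
    using sum_query_degree_le[OF assms(1)] by simp
  finally show ?thesis .
qed

lemma exists_half_splitting_set:
  assumes "finite E" "\<forall>e\<in>E. e \<subseteq> {1..n} \<and> j \<le> card e" "card E < mB j" "x \<in> {1..n}"
    and large: "j * mB j < n div 2"
  obtains A where "A \<subseteq> {1..n}" "card A = (n + 1) div 2" "x \<in> A" "\<forall>e\<in>E. gm_ans (\<lambda>i. i \<in> A) e"
proof (rule exists_splitting_set[OF assms(1-4)])
  have "j * card E \<le> j * mB j"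
    using assms(3) by simp
  then show "j * card E < (n + 1) div 2" "(n + 1) div 2 + j * card E < n"
    using large by linarith+
qed


lemma query_degree_ge_if_bm_success_even:
  assumes valid: "valid_strategy n k Qs" and "bm_success n Qs" "even n" "x \<in> {1..n}"
    and large: "(k - 1) * mB (k - 1) < n div 2"
  shows "mB (k - 1) \<le> query_degree Qs x"
proof (rule ccontr)
  let ?E = "residual_queries Qs {x}"
  assume "\<not> mB (k - 1) \<le> query_degree Qs x"
  then have "card ?E < mB (k - 1)"
    using card_residual_queries_le[of "{x}" Qs] by simp
  moreover have "\<forall>e\<in>?E. e \<subseteq> {1..n} \<and> k - 1 \<le> card e"
    using residual_queries_size[OF valid, of "{x}"] by simp
  ultimately obtain A where A: "A \<subseteq> {1..n}" "card A = n div 2" "x \<in> A" "\<forall>e\<in>?E. gm_ans (\<lambda>i. i \<in> A) e"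
    using exists_half_splitting_set[OF finite_residual_queries _ _ \<open>x \<in> {1..n}\<close> large]
      \<open>even n\<close> by (metis even_succ_div_two)
  have "\<exists>a. \<forall>c\<in>{\<lambda>j. j \<in> A, \<lambda>j. j \<in> A - {x}}. bm_adm c Q a" if "Q \<in> set Qs" for Q
  proof (rule exists_common_bm_answer[of _ Q "{x}" "\<lambda>j. j \<in> A"])
    show "Q \<inter> {x} \<noteq> {} \<Longrightarrow> gm_ans (\<lambda>j. j \<in> A) (Q - {x})"
      using bspec[OF A(4) residual_queriesI[OF that]] .
  qed auto
  then show False
    using not_bm_successI[OF _ _ not_determined_even[OF \<open>even n\<close> A(1-3)]] \<open>bm_success n Qs\<close>
    by blast
qed

lemma query_degrees_ge_if_bm_success_odd:
  assumes valid: "valid_strategy n k Qs" and "bm_success n Qs" "odd n"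
    and xy: "x \<in> {1..n}" "y \<in> {1..n}" "x \<noteq> y"
    and large: "(k - 2) * mB (k - 2) < n div 2"
  shows "mB (k - 2) \<le> query_degree Qs x + query_degree Qs y"
proof (rule ccontr)
  let ?E = "residual_queries Qs {x, y}"
  assume "\<not> mB (k - 2) \<le> query_degree Qs x + query_degree Qs y"
  then have "card ?E < mB (k - 2)"
    using card_residual_queries_le[of "{x, y}" Qs] xy(3) by simp
  moreover have "\<forall>e\<in>?E. e \<subseteq> {1..n} \<and> k - 2 \<le> card e"
    using residual_queries_size[OF valid, of "{x, y}"] xy(3) by (simp add: numeral_2_eq_2)
  ultimately obtain A where A: "A \<subseteq> {1..n}" "card A = n div 2 + 1" "x \<in> A"
    "\<forall>e\<in>?E. gm_ans (\<lambda>i. i \<in> A) e"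
    using exists_half_splitting_set[OF finite_residual_queries _ _ xy(1) large]
      \<open>odd n\<close> by (metis odd_succ_div_two)
  define B where "B = (if y \<in> A then A - {y} else insert y (A - {x}))"
  let ?C = "{\<lambda>j. j \<in> A, \<lambda>j. j \<in> A - {x}, \<lambda>j. j \<in> B}"
  have agree: "\<forall>c\<in>?C. \<forall>j\<in>Q - {x, y}. c j = (j \<in> A)" for Q
    unfolding B_def by simp
  have answers: "\<forall>Q\<in>set Qs. \<exists>a. \<forall>c\<in>?C. bm_adm c Q a"
  proof
    fix Q
    assume "Q \<in> set Qs"
    show "\<exists>a. \<forall>c\<in>?C. bm_adm c Q a"
    proof (rule exists_common_bm_answer[OF agree])
      assume "Q \<inter> {x, y} \<noteq> {}"
      then show "gm_ans (\<lambda>j. j \<in> A) (Q - {x, y})"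
        by (rule bspec[OF A(4) residual_queriesI[OF \<open>Q \<in> set Qs\<close>]])
    qed
  qed
  have "\<not> determined n ?C"
    using not_determined_odd[OF \<open>odd n\<close> A(1-3) not_majority_recolored[OF \<open>odd n\<close> A(1-3) xy(2,3)]]
    unfolding B_def .
  have "\<not> bm_success n Qs"
    by (rule not_bm_successI[OF _ answers \<open>\<not> determined n ?C\<close>, of "\<lambda>j. j \<in> A"]) simp
  then show False
    using \<open>bm_success n Qs\<close> by contradiction
qed

lemma query_degrees_ge_if_gm_success_odd:
  assumes valid: "valid_strategy n k Qs" and "gm_success n Qs" "odd n"
    and xy: "x \<in> {1..n}" "y \<in> {1..n}" "x \<noteq> y"
    and large: "(k - 1) * mB (k - 1) < n div 2"
  shows "mB (k - 1) \<le> query_degree Qs x + query_degree Qs y"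
proof (rule ccontr)
  let ?E = "residual_queries Qs {x} \<union> residual_queries Qs {y}"
  assume "\<not> mB (k - 1) \<le> query_degree Qs x + query_degree Qs y"
  then have "card ?E < mB (k - 1)"
    using card_Un_le[of "residual_queries Qs {x}" "residual_queries Qs {y}"]
      card_residual_queries_le[of "{x}" Qs] card_residual_queries_le[of "{y}" Qs] by simp
  moreover have "\<forall>e\<in>?E. e \<subseteq> {1..n} \<and> k - 1 \<le> card e"
    using residual_queries_size[OF valid, of "{x}"] residual_queries_size[OF valid, of "{y}"] by auto
  ultimately obtain A where A: "A \<subseteq> {1..n}" "card A = n div 2 + 1" "x \<in> A"
    "\<forall>e\<in>?E. gm_ans (\<lambda>i. i \<in> A) e"
    using exists_half_splitting_set[OF finite_UnI[OF finite_residual_queries finite_residual_queries]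
        _ _ xy(1) large] \<open>odd n\<close> by (metis odd_succ_div_two)
  have split: "gm_ans (\<lambda>j. j \<in> A) (Q - {z})" if "Q \<in> set Qs" "z \<in> Q" "z \<in> {x, y}" for Q z
  proof -
    have "Q - {z} \<in> ?E"
      using residual_queriesI[OF that(1), of "{z}"] that(2,3) by blast
    then show ?thesis
      using A(4) by blast
  qed
  define B where "B = (if y \<in> A then A - {y} else insert y (A - {x}))"
  have "gm_ans (\<lambda>j. j \<in> A - {x}) Q = gm_ans (\<lambda>j. j \<in> A) Q" if "Q \<in> set Qs" for Q
    by (rule gm_ans_eq_if_agree_off[of Q "{x}"]) (use split[OF that] in auto)
  moreover have "gm_ans (\<lambda>j. j \<in> B) Q = gm_ans (\<lambda>j. j \<in> A) Q" if "Q \<in> set Qs" for Q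
  proof (cases "y \<in> A")
    case True
    show ?thesis
      by (rule gm_ans_eq_if_agree_off[of Q "{y}"]) (use split[OF that] True in \<open>auto simp: B_def\<close>)
  next
    case False
    show ?thesis
      by (rule gm_ans_eq_if_swapped[of Q x y]) (use split[OF that] False A(3) xy(3) in \<open>auto simp: B_def\<close>)
  qed
  ultimately have "\<forall>c\<in>{\<lambda>j. j \<in> A, \<lambda>j. j \<in> A - {x}, \<lambda>j. j \<in> B}. \<forall>Q\<in>set Qs.
      gm_ans c Q = gm_ans (\<lambda>j. j \<in> A) Q"
    by simp
  moreover have "\<not> determined n {\<lambda>j. j \<in> A, \<lambda>j. j \<in> A - {x}, \<lambda>j. j \<in> B}"
    using not_determined_odd[OF \<open>odd n\<close> A(1-3) not_majority_recolored[OF \<open>odd n\<close> A(1-3) xy(2,3)]]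
    unfolding B_def .
  ultimately have "\<not> gm_success n Qs"
    by (intro not_gm_successI[of "\<lambda>j. j \<in> A"]) simp_all
  then show False
    using \<open>gm_success n Qs\<close> by contradiction
qed

lemma f_even_mult_le:
  assumes "even n" "0 < k" "n * m \<le> k * N"
  shows "f n k * real m \<le> real N"
proof -
  have "real n * real m \<le> real k * real N"
    using assms(3) by (metis of_nat_le_iff of_nat_mult)
  then show ?thesis
    using assms(1,2) unfolding f_def by (simp add: field_simps)
qed

lemma f_odd_mult_le:
  assumes "odd n" "0 < k" "(n - 1) * m \<le> 2 * k * N"
  shows "f n k * real m \<le> real N"
proof -
  have "real (n - 1) * real m \<le> 2 * real k * real N"
    using assms(3) by (metis of_nat_le_iff of_nat_mult of_nat_numeral)
  moreover have "real (n - 1) = real n - 1"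
    using \<open>odd n\<close> by (cases n) auto
  ultimately show ?thesis
    using assms(1,2) unfolding f_def by (simp add: field_simps)
qed

lemma N_BM_ge_even:
  assumes k: "2 \<le> k" "2 * k \<le> n + 1" and "even n" and large: "(k - 1) * mB (k - 1) < n div 2"
  shows "f n k * real (mB (k - 1)) \<le> real (N_BM k n)"
proof -
  obtain Qs where Qs: "length Qs = N_BM k n" "valid_strategy n k Qs" "bm_success n Qs"
    using N_BM_attained[OF k] by blast
  have "n * mB (k - 1) \<le> k * N_BM k n"
    using length_ge_if_degrees_ge[OF Qs(2) query_degree_ge_if_bm_success_even[OF Qs(2,3) \<open>even n\<close> _ large]]
      Qs(1) by simp
  then show ?thesis
    using f_even_mult_le \<open>even n\<close> k(1) by simp
qed

lemma N_GM_ge_odd: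
  assumes k: "2 \<le> k" "2 * k \<le> n + 1" and "odd n" and large: "(k - 1) * mB (k - 1) < n div 2"
  shows "f n k * real (mB (k - 1)) \<le> real (N_GM k n)"
proof -
  obtain Qs where Qs: "length Qs = N_GM k n" "valid_strategy n k Qs" "gm_success n Qs"
    using N_GM_attained[OF k] by blast
  have "(n - 1) * mB (k - 1) \<le> 2 * k * N_GM k n"
    using length_ge_if_pair_degrees_ge[OF Qs(2)
        query_degrees_ge_if_gm_success_odd[OF Qs(2,3) \<open>odd n\<close> _ _ _ large]] Qs(1)
    by simp
  then show ?thesis
    using f_odd_mult_le \<open>odd n\<close> k(1) by simp
qed

lemma N_BM_ge_odd:
  assumes k: "2 \<le> k" "2 * k \<le> n + 1" and "odd n" and large: "(k - 2) * mB (k - 2) < n div 2"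
  shows "f n k * real (mB (k - 2)) \<le> real (N_BM k n)"
proof -
  obtain Qs where Qs: "length Qs = N_BM k n" "valid_strategy n k Qs" "bm_success n Qs"
    using N_BM_attained[OF k] by blast
  have "(n - 1) * mB (k - 2) \<le> 2 * k * N_BM k n"
    using length_ge_if_pair_degrees_ge[OF Qs(2)
        query_degrees_ge_if_bm_success_odd[OF Qs(2,3) \<open>odd n\<close> _ _ _ large]] Qs(1)
    by simp
  then show ?thesis
    using f_odd_mult_le \<open>odd n\<close> k(1) by simp
qed

theorem theorem10:
  fixes k :: nat
  assumes "k \<ge> 3"
  shows "\<exists>n0. \<forall>n\<ge>n0.
    (even n \<longrightarrow> f n k * real (mB (k - 1)) \<le> real (N_BM k n) \<and> N_BM k n \<le> N_GM k n) \<and>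
    (odd n \<longrightarrow> f n k * real (mB (k - 1)) \<le> real (N_GM k n) \<and>
                f n k * real (mB (k - 2)) \<le> real (N_BM k n))"
proof (rule exI[of _ "2 * (k * mB (k - 1) + k * mB (k - 2) + k)"], intro allI impI)
  fix n
  assume n: "2 * (k * mB (k - 1) + k * mB (k - 2) + k) \<le> n"
  have k: "2 \<le> k" "2 * k \<le> n + 1"
    using assms n by auto
  have "k * mB (k - 1) + k * mB (k - 2) + k \<le> n div 2"
    using div_le_mono[OF n, of 2] by simp
  moreover have "(k - 1) * mB (k - 1) \<le> k * mB (k - 1)" "(k - 2) * mB (k - 2) \<le> k * mB (k - 2)"
    by simp_all
  ultimately have "(k - 1) * mB (k - 1) < n div 2" "(k - 2) * mB (k - 2) < n div 2"
    using assms by linarith+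
  then show "(even n \<longrightarrow> f n k * real (mB (k - 1)) \<le> real (N_BM k n) \<and> N_BM k n \<le> N_GM k n) \<and>
    (odd n \<longrightarrow> f n k * real (mB (k - 1)) \<le> real (N_GM k n) \<and>
                f n k * real (mB (k - 2)) \<le> real (N_BM k n))"
    using N_BM_ge_even[OF k] N_GM_ge_odd[OF k] N_BM_ge_odd[OF k] N_BM_le_N_GM[OF k] by blast
qed

end
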